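(* Let $n\ge 1$ and $m\ge 1$ be integers and let $H_m(\mathbb B)$ be the analytic functional Hilbert space on the open unit ball $\mathbb B\subset\mathbb C^n$ with reproducing kernel $K_m(z,w)=(1-\langle z,w\rangle)^{-m}$. For each multiindex $\gamma\in\mathbb N^n$, with $M_z^\gamma=M_{z_1}^{\gamma_1}\cdots M_{z_n}^{\gamma_n}\in L(H_m(\mathbb B))$, \[ M^{\prime *}_z (M^{\gamma}_z) M^\prime_z = P_{{\rm Im}M^*_z}\Big(\oplus\sum^{m-1}_{j=0}(-1)^j\binom{m}{j+1}\sigma^j_{M_z}(M^{\gamma}_z)\Big)P_{{\rm Im}M^*_z}. \]
   Context: $H_m(\mathbb B)=\{f=\sum_{\alpha\in\mathbb N^n}f_\alpha z^\alpha\in\mathcal O(\mathbb B):\ \|f\|^2=\sum_\alpha |f_\alpha|^2/\rho_m(\alpha)<\infty\}$ with $\rho_m(\alpha)=\frac{(m+|\alpha|-1)!}{\alpha!(m-1)!}$. $M_{z_i}$ is multiplication by $z_i$ on $H_m(\mathbb B)$. Let $\mathbb H_k$ denote the space of homogeneous polynomials of degree $k$, so $H_m(\mathbb B)$ is the orthogonal sum of the $\mathbb H_k$, and every $f$ has homogeneous expansion $f=\sum_k f_k$, $f_k\in\mathbb H_k$. $M_z:H_m(\mathbb B)^n\to H_m(\mathbb B)$, $(f_i)\mapsto\sum_i z_if_i$, is the row multiplication operator (it has closed range), $M_z^*:H_m(\mathbb B)\to H_m(\mathbb B)^n$, $f\mapsto (M_{z_i}^*f)_i$, is its adjoint, and $P_{{\rm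 Im}M_z^*}$ is the orthogonal projection of $H_m(\mathbb B)^n$ onto the closed range of $M_z^*$. Let $\delta\in L(H_m(\mathbb B))$ be the diagonal operator $\delta(\sum_k f_k)=f_0+\sum_{k\ge1}\frac{m+k-1}{k}f_k$, and define $M_z'=\delta M_z:H_m(\mathbb B)^n\to H_m(\mathbb B)$, with adjoint $M_z'^*$. For $X\in L(H_m(\mathbb B))$, $\sigma_{M_z}(X)=\sum_{i=1}^n M_{z_i}XM_{z_i}^*$, $\sigma^j_{M_z}$ is its $j$-th iterate ($\sigma^0_{M_z}(X)=X$), and $\oplus X$ denotes $X\oplus\cdots\oplus X$ ($n$ copies) on $H_m(\mathbb B)^n$. *)

theory Defs
  imports "HOL-Analysis.Analysis"
begin

text \<open>Model: the coordinates of C^n are indexed by a finite type 'n (n = CARD('n) >= 1).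
  An element of H_m(B) is identified with its family of Taylor coefficients
  f :: ('n => nat) => complex (multiindex alpha |-> f_alpha).\<close>

type_synonym 'n coeffs = "('n \<Rightarrow> nat) \<Rightarrow> complex"

definition mabs :: "('n::finite \<Rightarrow> nat) \<Rightarrow> nat" where
  "mabs \<alpha> = (\<Sum>i\<in>UNIV. \<alpha> i)"

definition mfact :: "('n::finite \<Rightarrow> nat) \<Rightarrow> nat" where
  "mfact \<alpha> = (\<Prod>i\<in>UNIV. fact (\<alpha> i))"

definition rho :: "nat \<Rightarrow> ('n::finite \<Rightarrow> nat) \<Rightarrow> real" where
  "rho m \<alpha> = fact (m + mabs \<alpha> - 1) / (real (mfact \<alpha>) * fact (m - 1))"

definition Hm :: "nat \<Rightarrow> ('n::finite) coeffs set" where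
  "Hm m = {f. (\<lambda>\<alpha>. (cmod (f \<alpha>))\<^sup>2 / rho m \<alpha>) summable_on UNIV}"

definition hinner :: "nat \<Rightarrow> ('n::finite) coeffs \<Rightarrow> 'n coeffs \<Rightarrow> complex" where
  "hinner m f g = (\<Sum>\<^sub>\<infinity>\<alpha>. f \<alpha> * cnj (g \<alpha>) / complex_of_real (rho m \<alpha>))"

definition Hmn :: "nat \<Rightarrow> ('n::finite \<Rightarrow> 'n coeffs) set" where
  "Hmn m = {F. \<forall>i. F i \<in> Hm m}"

definition hinner_n :: "nat \<Rightarrow> ('n::finite \<Rightarrow> 'n coeffs) \<Rightarrow> ('n \<Rightarrow> 'n coeffs) \<Rightarrow> complex" where
  "hinner_n m F G = (\<Sum>i\<in>UNIV. hinner m (F i) (G i))"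

text \<open>Multiplication by the monomial z^gamma, i.e. M_z^gamma.\<close>
definition Mzpow :: "('n::finite \<Rightarrow> nat) \<Rightarrow> 'n coeffs \<Rightarrow> 'n coeffs" where
  "Mzpow \<gamma> f = (\<lambda>\<alpha>. if (\<forall>i. \<gamma> i \<le> \<alpha> i) then f (\<lambda>i. \<alpha> i - \<gamma> i) else 0)"

definition Mz :: "'n::finite \<Rightarrow> 'n coeffs \<Rightarrow> 'n coeffs" where
  "Mz i = Mzpow (\<lambda>k. if k = i then 1 else 0)"

definition adjoint :: "'a set \<Rightarrow> ('a \<Rightarrow> 'a \<Rightarrow> complex) \<Rightarrow> ('b \<Rightarrow> 'b \<Rightarrow> complex)
    \<Rightarrow> ('a \<Rightarrow> 'b) \<Rightarrow> 'b \<Rightarrow> 'a" where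
  "adjoint S1 ip1 ip2 A = (\<lambda>g. THE h. h \<in> S1 \<and> (\<forall>f\<in>S1. ip2 (A f) g = ip1 f h))"

definition Mz_adj :: "nat \<Rightarrow> 'n::finite \<Rightarrow> 'n coeffs \<Rightarrow> 'n coeffs" where
  "Mz_adj m i = adjoint (Hm m) (hinner m) (hinner m) (Mz i)"

definition Mrow :: "('n::finite \<Rightarrow> 'n coeffs) \<Rightarrow> 'n coeffs" where
  "Mrow F = (\<lambda>\<alpha>. \<Sum>i\<in>UNIV. Mz i (F i) \<alpha>)"

definition Mz_star :: "nat \<Rightarrow> 'n::finite coeffs \<Rightarrow> ('n \<Rightarrow> 'n coeffs)" where
  "Mz_star m f = (\<lambda>i. Mz_adj m i f)"

definition delta :: "nat \<Rightarrow> 'n::finite coeffs \<Rightarrow> 'n coeffs" where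
  "delta m f = (\<lambda>\<alpha>. if mabs \<alpha> = 0 then f \<alpha>
       else of_nat (m + mabs \<alpha> - 1) / of_nat (mabs \<alpha>) * f \<alpha>)"

definition Mrow' :: "nat \<Rightarrow> ('n::finite \<Rightarrow> 'n coeffs) \<Rightarrow> 'n coeffs" where
  "Mrow' m F = delta m (Mrow F)"

definition Mrow'_adj :: "nat \<Rightarrow> 'n::finite coeffs \<Rightarrow> ('n \<Rightarrow> 'n coeffs)" where
  "Mrow'_adj m = adjoint (Hmn m) (hinner_n m) (hinner m) (Mrow' m)"

definition ipclosure :: "('a::minus) set \<Rightarrow> ('a \<Rightarrow> 'a \<Rightarrow> complex) \<Rightarrow> 'a set \<Rightarrow> 'a set" where
  "ipclosure S ip V = {x\<in>S. \<forall>e>0. \<exists>v\<in>V. sqrt (Re (ip (x - v) (x - v))) < e}"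

definition oproj :: "('a::minus) set \<Rightarrow> ('a \<Rightarrow> 'a \<Rightarrow> complex) \<Rightarrow> 'a set \<Rightarrow> 'a \<Rightarrow> 'a" where
  "oproj S ip V x = (THE p. p \<in> ipclosure S ip V \<and> (\<forall>v\<in>ipclosure S ip V. ip (x - p) v = 0))"

definition P_ImMzstar :: "nat \<Rightarrow> ('n::finite \<Rightarrow> 'n coeffs) \<Rightarrow> ('n \<Rightarrow> 'n coeffs)" where
  "P_ImMzstar m = oproj (Hmn m) (hinner_n m) (Mz_star m ` Hm m)"

definition sigma :: "nat \<Rightarrow> ('n::finite coeffs \<Rightarrow> 'n coeffs) \<Rightarrow> ('n coeffs \<Rightarrow> 'n coeffs)" where
  "sigma m X = (\<lambda>f \<alpha>. \<Sum>i\<in>UNIV. Mz i (X (Mz_adj m i f)) \<alpha>)"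

definition oplus_n :: "('n::finite coeffs \<Rightarrow> 'n coeffs) \<Rightarrow> ('n \<Rightarrow> 'n coeffs) \<Rightarrow> ('n \<Rightarrow> 'n coeffs)" where
  "oplus_n X = (\<lambda>F i. X (F i))"

definition binsum :: "nat \<Rightarrow> ('n::finite coeffs \<Rightarrow> 'n coeffs) \<Rightarrow> ('n coeffs \<Rightarrow> 'n coeffs)" where
  "binsum m X = (\<lambda>f \<alpha>. \<Sum>j<m. (-1)^j * of_nat (m choose (j + 1)) * ((sigma m ^^ j) X) f \<alpha>)"

end

(*
  In the monomial basis every operator in the identity is a weighted shift whose weights depend
  only on the total degree.  Write D_w for multiplication of the coefficient at alpha by w(|alpha|).
  The adjoint of M_{z_i} is f |-> (alpha |-> (alpha_i + 1) / (m + |alpha|) f(alpha + e_i)), so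
  M_z'^* = M_z^* delta and sum_i M_{z_i} D_w M_{z_i}^* = D_w' with w'(k) = w(k - 1) k / (m + k - 1).
  Hence sigma^j(M_z^gamma) = M_z^gamma D_{w_j} with w_j(k) = C(k, j) / C(m + k - 1, j).  Since
  M_z M_z^* delta is the identity on functions vanishing at 0, the projection onto the closed range
  of M_z^* is M_z^* delta M_z.  Both sides thus become M_z^* delta M_z^gamma applied to
  delta M_z F; the remaining fact, that the binomial combination of the w_j shifted once is 1 in
  positive degree, is the Chu-Vandermonde identity for (1 - x)^m (1 - x)^(-m) = 1.
*)
theory Submission
  imports Defs
begin

section \<open>Multiindices and the weights rho\<close>

abbreviation incr :: "('n \<Rightarrow> nat) \<Rightarrow> 'n \<Rightarrow> ('n \<Rightarrow> nat)" where
  "incr \<alpha> i \<equiv> \<alpha>(i := Suc (\<alpha> i))"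

lemma inj_incr: "inj (\<lambda>\<alpha>. incr \<alpha> i)"
proof (rule injI)
  fix x y :: "'a \<Rightarrow> nat"
  assume xy: "incr x i = incr y i"
  have "x k = y k" for k
    using fun_cong[OF xy, of k] by (cases "k = i") auto
  then show "x = y" by auto
qed

lemma not_in_range_incr: "\<alpha> \<notin> range (\<lambda>\<beta>. incr \<beta> i) \<Longrightarrow> \<alpha> i = 0"
proof (rule ccontr)
  assume "\<alpha> \<notin> range (\<lambda>\<beta>. incr \<beta> i)" "\<alpha> i \<noteq> 0"
  moreover from \<open>\<alpha> i \<noteq> 0\<close> have "\<alpha> = incr (\<alpha>(i := \<alpha> i - 1)) i" by auto
  ultimately show False by blast
qed

lemma sum_fun_upd_nat:
  fixes \<alpha> :: "'n::finite \<Rightarrow> nat"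
  shows "(\<Sum>k\<in>UNIV. (\<alpha>(i := x)) k) = (\<Sum>k\<in>UNIV. \<alpha> k) - \<alpha> i + x"
proof -
  have split: "(\<Sum>k\<in>UNIV. \<beta> k) = \<beta> i + (\<Sum>k\<in>UNIV-{i}. \<beta> k)" for \<beta> :: "'n \<Rightarrow> nat"
    by (rule sum.remove) auto
  have "(\<Sum>k\<in>UNIV-{i}. (\<alpha>(i := x)) k) = (\<Sum>k\<in>UNIV-{i}. \<alpha> k)"
    by (rule sum.cong) auto
  then show ?thesis using split[of "\<alpha>(i := x)"] split[of \<alpha>] by simp
qed

lemma mabs_ge_component: "\<alpha> i \<le> mabs \<alpha>"
  unfolding mabs_def by (rule member_le_sum) auto

lemma mabs_eq_0_component: "mabs \<alpha> = 0 \<Longrightarrow> \<alpha> i = 0"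
  using mabs_ge_component[of \<alpha> i] by simp

lemma mabs_incr: "mabs (incr \<alpha> i) = Suc (mabs \<alpha>)"
  using sum_fun_upd_nat[of \<alpha> i "Suc (\<alpha> i)"] mabs_ge_component[of \<alpha> i] unfolding mabs_def by simp

lemma incr_decr: "1 \<le> \<alpha> i \<Longrightarrow> incr (\<alpha>(i := \<alpha> i - 1)) i = \<alpha>"
  by auto

lemma mabs_decr: "1 \<le> \<alpha> i \<Longrightarrow> mabs (\<alpha>(i := \<alpha> i - 1)) = mabs \<alpha> - 1"
  using mabs_incr[of "\<alpha>(i := \<alpha> i - 1)" i] incr_decr[of \<alpha> i] by simp

lemma mfact_incr: "mfact (incr \<alpha> i) = mfact \<alpha> * Suc (\<alpha> i)"
proof -
  have split: "(\<Prod>k\<in>UNIV. \<beta> k) = \<beta> i * (\<Prod>k\<in>UNIV-{i}. \<beta> k)" for \<beta> :: "'a \<Rightarrow> nat"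
    by (rule prod.remove) auto
  have "(\<Prod>k\<in>UNIV-{i}. fact ((incr \<alpha> i) k)) = (\<Prod>k\<in>UNIV-{i}. (fact (\<alpha> k)::nat))"
    by (rule prod.cong) auto
  then show ?thesis unfolding mfact_def
    using split[of "\<lambda>k. fact ((incr \<alpha> i) k)"] split[of "\<lambda>k. fact (\<alpha> k)"] by (simp add: algebra_simps)
qed

lemma mfact_pos: "mfact \<alpha> > 0"
  unfolding mfact_def by (simp add: prod_pos)

lemma rho_pos: "m \<ge> 1 \<Longrightarrow> rho m \<alpha> > 0"
  unfolding rho_def using mfact_pos[of \<alpha>] by simp

lemma rho_incr:
  assumes "m \<ge> 1"
  shows "rho m (incr \<alpha> i) * Suc (\<alpha> i) = rho m \<alpha> * (m + mabs \<alpha>)"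
proof -
  have fact_Suc: "(fact (m + mabs \<alpha>) :: real) = (m + mabs \<alpha>) * fact (m + mabs \<alpha> - 1)"
    using assms by (metis Suc_diff_1 add_gr_0 fact_Suc of_nat_fact less_le_trans zero_less_one of_nat_mult)
  have "rho m (incr \<alpha> i) = (m + mabs \<alpha>) * fact (m + mabs \<alpha> - 1) / (mfact \<alpha> * fact (m - 1) * Suc (\<alpha> i))"
    unfolding rho_def mabs_incr mfact_incr using fact_Suc by (simp add: algebra_simps)
  also have "\<dots> = rho m \<alpha> * (m + mabs \<alpha>) / Suc (\<alpha> i)"
    unfolding rho_def by (simp add: field_simps)
  finally show ?thesis by (simp add: field_simps)
qed

lemma rho_le_rho_incr:
  assumes "m \<ge> 1"
  shows "rho m \<alpha> \<le> rho m (incr \<alpha> i)"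
proof -
  have "Suc (\<alpha> i) \<le> m + mabs \<alpha>" using mabs_ge_component[of \<alpha> i] assms by simp
  then have "rho m \<alpha> * Suc (\<alpha> i) \<le> rho m \<alpha> * (m + mabs \<alpha>)"
    using rho_pos[OF assms, of \<alpha>] by (intro mult_left_mono) auto
  also have "\<dots> = rho m (incr \<alpha> i) * Suc (\<alpha> i)" using rho_incr[OF assms, of \<alpha> i] by linarith
  finally show ?thesis by simp
qed

lemma rho_mono:
  assumes "m \<ge> 1"
  shows "rho m \<beta> \<le> rho m (\<lambda>k. \<beta> k + \<gamma> k)"
proof (induction "mabs \<gamma>" arbitrary: \<gamma>)
  case 0
  then show ?case by (simp add: mabs_eq_0_component)
next
  case (Suc n)
  then obtain i where i: "\<gamma> i > 0" unfolding mabs_def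
    by (metis (no_types, lifting) Zero_not_Suc gr0I sum.neutral)
  define \<gamma>' where "\<gamma>' = \<gamma>(i := \<gamma> i - 1)"
  have "mabs \<gamma>' = n" using Suc(2) i mabs_decr[of \<gamma> i] unfolding \<gamma>'_def by simp
  then have "rho m \<beta> \<le> rho m (\<lambda>k. \<beta> k + \<gamma>' k)" using Suc(1) by simp
  also have "\<dots> \<le> rho m (incr (\<lambda>k. \<beta> k + \<gamma>' k) i)" by (rule rho_le_rho_incr[OF assms])
  also have "incr (\<lambda>k. \<beta> k + \<gamma>' k) i = (\<lambda>k. \<beta> k + \<gamma> k)"
    using i unfolding \<gamma>'_def by auto
  finally show ?case .
qed

section \<open>The coefficient space H_m\<close>

definition hnorm_term :: "nat \<Rightarrow> 'n::finite coeffs \<Rightarrow> ('n \<Rightarrow> nat) \<Rightarrow> real" where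
  "hnorm_term m f \<alpha> = (cmod (f \<alpha>))\<^sup>2 / rho m \<alpha>"

definition hnorm_sq :: "nat \<Rightarrow> 'n::finite coeffs \<Rightarrow> real" where
  "hnorm_sq m f = infsum (hnorm_term m f) UNIV"

definition hinner_term :: "nat \<Rightarrow> 'n::finite coeffs \<Rightarrow> 'n coeffs \<Rightarrow> ('n \<Rightarrow> nat) \<Rightarrow> complex" where
  "hinner_term m f g \<alpha> = f \<alpha> * cnj (g \<alpha>) / complex_of_real (rho m \<alpha>)"

lemma Hm_iff: "f \<in> Hm m \<longleftrightarrow> hnorm_term m f summable_on UNIV"
  unfolding Hm_def hnorm_term_def[abs_def] by simp

lemma hinner_eq_infsum: "hinner m f g = infsum (hinner_term m f g) UNIV"
  unfolding hinner_def hinner_term_def by simp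

lemma hnorm_term_nonneg: "m \<ge> 1 \<Longrightarrow> hnorm_term m f \<alpha> \<ge> 0"
  unfolding hnorm_term_def using rho_pos[of m \<alpha>] by simp

lemma hnorm_sq_nonneg: "m \<ge> 1 \<Longrightarrow> hnorm_sq m f \<ge> 0"
  unfolding hnorm_sq_def by (intro infsum_nonneg hnorm_term_nonneg)

lemma Hm_dominated:
  assumes m: "m \<ge> 1" and f: "f \<in> Hm m" and inj: "inj_on \<phi> S"
    and supp: "\<And>\<alpha>. \<alpha> \<notin> S \<Longrightarrow> h \<alpha> = 0"
    and bound: "\<And>\<alpha>. \<alpha> \<in> S \<Longrightarrow> hnorm_term m h \<alpha> \<le> C * hnorm_term m f (\<phi> \<alpha>)"
  shows "h \<in> Hm m"
proof -
  have "hnorm_term m f summable_on (\<phi> ` S)"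
    using f unfolding Hm_iff by (rule summable_on_subset_banach) auto
  then have "(hnorm_term m f \<circ> \<phi>) summable_on S" using summable_on_reindex[OF inj] by blast
  then have "(\<lambda>\<alpha>. C * hnorm_term m f (\<phi> \<alpha>)) summable_on S"
    by (intro summable_on_cmult_right) (simp add: o_def)
  then have "hnorm_term m h summable_on S"
    by (rule summable_on_comparison_test) (use bound hnorm_term_nonneg[OF m] in auto)
  moreover have "hnorm_term m h summable_on S \<longleftrightarrow> hnorm_term m h summable_on UNIV"
    by (rule summable_on_cong_neutral) (auto simp: hnorm_term_def supp)
  ultimately show ?thesis unfolding Hm_iff by simp
qed

lemma Hm_zero: "(\<lambda>_. 0) \<in> Hm m"
  unfolding Hm_iff hnorm_term_def by simp

lemma Hm_add:
  assumes m: "m \<ge> 1" and "f \<in> Hm m" "g \<in> Hm m"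
  shows "(\<lambda>\<alpha>. f \<alpha> + g \<alpha>) \<in> Hm m"
proof -
  have "(\<lambda>\<alpha>. 2 * hnorm_term m f \<alpha> + 2 * hnorm_term m g \<alpha>) summable_on UNIV"
    using assms unfolding Hm_iff by (intro summable_on_add summable_on_cmult_right)
  then show ?thesis unfolding Hm_iff
  proof (rule summable_on_comparison_test)
    fix \<alpha>
    have "(cmod (f \<alpha> + g \<alpha>))\<^sup>2 \<le> (cmod (f \<alpha>) + cmod (g \<alpha>))\<^sup>2"
      by (intro power_mono norm_triangle_ineq) simp
    also have "\<dots> \<le> 2 * (cmod (f \<alpha>))\<^sup>2 + 2 * (cmod (g \<alpha>))\<^sup>2"
      using sum_squares_bound[of "cmod (f \<alpha>)" "cmod (g \<alpha>)"] by (simp add: power2_sum)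
    finally show "hnorm_term m (\<lambda>\<alpha>. f \<alpha> + g \<alpha>) \<alpha> \<le> 2 * hnorm_term m f \<alpha> + 2 * hnorm_term m g \<alpha>"
      using rho_pos[OF m, of \<alpha>] unfolding hnorm_term_def
      by (simp add: add_divide_distrib[symmetric] divide_right_mono)
  qed (use hnorm_term_nonneg[OF m] in auto)
qed

lemma Hm_sum:
  assumes m: "m \<ge> 1" and "finite I" and "\<And>i. i \<in> I \<Longrightarrow> F i \<in> Hm m"
  shows "(\<lambda>\<alpha>. \<Sum>i\<in>I. F i \<alpha>) \<in> Hm m"
  using assms(2,3)
proof (induction I rule: finite_induct)
  case empty then show ?case using Hm_zero by simp
next
  case (insert x I)
  then show ?case using Hm_add[OF m, of "F x" "\<lambda>\<alpha>. \<Sum>i\<in>I. F i \<alpha>"] by simp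
qed

lemma hinner_term_norm_le:
  assumes m: "m \<ge> 1" and c: "c > 0"
  shows "norm (hinner_term m f g \<alpha>) \<le> c / 2 * hnorm_term m f \<alpha> + 1 / (2 * c) * hnorm_term m g \<alpha>"
proof -
  define x where "x = cmod (f \<alpha>)"
  define y where "y = cmod (g \<alpha>)"
  have r: "rho m \<alpha> > 0" by (rule rho_pos[OF m])
  have "c * (2 * x * y) \<le> c * (c * x\<^sup>2 + y\<^sup>2 / c)"
    using sum_squares_bound[of "c * x" y] c by (simp add: algebra_simps power2_eq_square)
  then have "x * y / rho m \<alpha> \<le> (c * x\<^sup>2 + y\<^sup>2 / c) / 2 / rho m \<alpha>"
    using c r by (intro divide_right_mono) auto
  then show ?thesis
    unfolding hinner_term_def hnorm_term_def x_def y_def using r c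
    by (simp add: norm_mult norm_divide field_simps)
qed

lemma hinner_term_abs_summable:
  assumes m: "m \<ge> 1" and f: "f \<in> Hm m" and g: "g \<in> Hm m"
  shows "(\<lambda>\<alpha>. norm (hinner_term m f g \<alpha>)) summable_on UNIV"
proof (rule Infinite_Sum.abs_summable_on_comparison_test')
  show "(\<lambda>\<alpha>. 1 / 2 * hnorm_term m f \<alpha> + 1 / (2 * 1) * hnorm_term m g \<alpha>) summable_on UNIV"
    using f g unfolding Hm_iff by (intro summable_on_add summable_on_cmult_right)
qed (use hinner_term_norm_le[OF m, of 1] in simp)

lemma hinner_term_summable: "m \<ge> 1 \<Longrightarrow> f \<in> Hm m \<Longrightarrow> g \<in> Hm m \<Longrightarrow> hinner_term m f g summable_on UNIV"
  by (rule abs_summable_summable[OF hinner_term_abs_summable])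

lemma hinner_bound:
  assumes m: "m \<ge> 1" and f: "f \<in> Hm m" and g: "g \<in> Hm m" and c: "c > 0"
  shows "cmod (hinner m f g) \<le> c / 2 * hnorm_sq m f + 1 / (2 * c) * hnorm_sq m g"
proof -
  have sf: "hnorm_term m f summable_on UNIV" and sg: "hnorm_term m g summable_on UNIV"
    using f g by (simp_all add: Hm_iff)
  have "cmod (hinner m f g) \<le> infsum (\<lambda>\<alpha>. norm (hinner_term m f g \<alpha>)) UNIV"
    unfolding hinner_eq_infsum by (rule norm_infsum_bound[OF hinner_term_abs_summable[OF m f g]])
  also have "\<dots> \<le> infsum (\<lambda>\<alpha>. c / 2 * hnorm_term m f \<alpha> + 1 / (2 * c) * hnorm_term m g \<alpha>) UNIV"
    using hinner_term_abs_summable[OF m f g] sf sg hinner_term_norm_le[OF m c]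
    by (intro infsum_mono summable_on_add summable_on_cmult_right) auto
  also have "\<dots> = c / 2 * hnorm_sq m f + 1 / (2 * c) * hnorm_sq m g"
    unfolding hnorm_sq_def using sf sg
    by (simp only: infsum_add[OF summable_on_cmult_right[OF sf] summable_on_cmult_right[OF sg]]
        infsum_cmult_right')
  finally show ?thesis .
qed

lemma hinner_add_left:
  assumes m: "m \<ge> 1" and "f \<in> Hm m" "g \<in> Hm m" "h \<in> Hm m"
  shows "hinner m (\<lambda>\<alpha>. f \<alpha> + g \<alpha>) h = hinner m f h + hinner m g h"
proof -
  have "hinner_term m (\<lambda>\<alpha>. f \<alpha> + g \<alpha>) h = (\<lambda>\<alpha>. hinner_term m f h \<alpha> + hinner_term m g h \<alpha>)"
    unfolding hinner_term_def by (auto simp: add_divide_distrib distrib_right)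
  then show ?thesis unfolding hinner_eq_infsum
    using infsum_add[OF hinner_term_summable[OF m assms(2,4)] hinner_term_summable[OF m assms(3,4)]] by simp
qed

lemma hinner_zero_left: "hinner m (\<lambda>_. 0) h = 0"
  unfolding hinner_def by simp

lemma hinner_sum_left:
  assumes m: "m \<ge> 1" and I: "finite I" and F: "\<And>i. i \<in> I \<Longrightarrow> F i \<in> Hm m" and h: "h \<in> Hm m"
  shows "hinner m (\<lambda>\<alpha>. \<Sum>i\<in>I. F i \<alpha>) h = (\<Sum>i\<in>I. hinner m (F i) h)"
  using I F
proof (induction I rule: finite_induct)
  case empty then show ?case by (simp add: hinner_zero_left)
next
  case (insert x I)
  then have "hinner m (\<lambda>\<alpha>. F x \<alpha> + (\<Sum>i\<in>I. F i \<alpha>)) h = hinner m (F x) h + hinner m (\<lambda>\<alpha>. \<Sum>i\<in>I. F i \<alpha>) h"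
    by (intro hinner_add_left[OF m _ _ h] Hm_sum[OF m]) auto
  then show ?case using insert by simp
qed

lemma hinner_uminus_left: "hinner m (\<lambda>\<alpha>. - f \<alpha>) h = - hinner m f h"
proof -
  have "hinner_term m (\<lambda>\<alpha>. - f \<alpha>) h = (\<lambda>\<alpha>. - hinner_term m f h \<alpha>)"
    unfolding hinner_term_def by auto
  then show ?thesis unfolding hinner_eq_infsum by (simp add: infsum_uminus)
qed

lemma Hm_uminus:
  assumes "f \<in> Hm m"
  shows "(\<lambda>\<alpha>. - f \<alpha>) \<in> Hm m"
  using assms unfolding Hm_iff hnorm_term_def by simp

lemma Hm_diff:
  assumes m: "m \<ge> 1" and "f \<in> Hm m" "g \<in> Hm m"
  shows "(\<lambda>\<alpha>. f \<alpha> - g \<alpha>) \<in> Hm m"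
  using Hm_add[OF m assms(2) Hm_uminus[OF assms(3)]] by simp

lemma hinner_diff_left:
  assumes m: "m \<ge> 1" and "f \<in> Hm m" "g \<in> Hm m" "h \<in> Hm m"
  shows "hinner m (\<lambda>\<alpha>. f \<alpha> - g \<alpha>) h = hinner m f h - hinner m g h"
  using hinner_add_left[OF m assms(2) Hm_uminus[OF assms(3)] assms(4)]
  by (simp add: hinner_uminus_left)

lemma hinner_commute: "hinner m g f = cnj (hinner m f g)"
proof -
  have "hinner_term m g f = (\<lambda>\<alpha>. cnj (hinner_term m f g \<alpha>))"
    unfolding hinner_term_def by (auto simp: mult.commute)
  then show ?thesis unfolding hinner_eq_infsum by simp
qed

lemma hinner_diff_right:
  assumes m: "m \<ge> 1" and "f \<in> Hm m" "g \<in> Hm m" "h \<in> Hm m"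
  shows "hinner m f (\<lambda>\<alpha>. g \<alpha> - h \<alpha>) = hinner m f g - hinner m f h"
  using hinner_diff_left[OF m assms(3,4,2)] by (metis complex_cnj_diff hinner_commute)

lemma hinner_self:
  assumes "f \<in> Hm m"
  shows "hinner m f f = complex_of_real (hnorm_sq m f)"
proof -
  have term_eq: "hinner_term m f f \<alpha> = complex_of_real (hnorm_term m f \<alpha>)" for \<alpha>
    unfolding hinner_term_def hnorm_term_def using complex_norm_square[of "f \<alpha>"] by simp
  have "(hinner_term m f f has_sum complex_of_real (hnorm_sq m f)) UNIV"
    using assms unfolding term_eq Hm_iff hnorm_sq_def by (intro has_sum_of_real has_sum_infsum)
  then show ?thesis unfolding hinner_eq_infsum by (rule infsumI)
qed

lemma hnorm_sq_eq_0:
  assumes m: "m \<ge> 1" and f: "f \<in> Hm m" and "hnorm_sq m f = 0"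
  shows "f = (\<lambda>_. 0)"
proof
  fix \<beta>
  have "sum (hnorm_term m f) {\<beta>} \<le> hnorm_sq m f"
    unfolding hnorm_sq_def
    by (rule finite_sum_le_infsum) (use f hnorm_term_nonneg[OF m] in \<open>auto simp: Hm_iff\<close>)
  then have "hnorm_term m f \<beta> = 0" using assms(3) hnorm_term_nonneg[OF m, of f \<beta>] by simp
  then show "f \<beta> = 0" using rho_pos[OF m, of \<beta>] unfolding hnorm_term_def by simp
qed

definition monomial_coeffs :: "('n::finite \<Rightarrow> nat) \<Rightarrow> 'n coeffs" where
  "monomial_coeffs \<beta> \<alpha> = (if \<alpha> = \<beta> then 1 else 0)"

lemma Hm_monomial_coeffs: "monomial_coeffs \<beta> \<in> Hm m"
  unfolding Hm_iff
  by (rule finite_nonzero_values_imp_summable_on, rule finite_subset[of _ "{\<beta>}"])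
    (auto simp: hnorm_term_def monomial_coeffs_def)

lemma hinner_monomial_coeffs: "hinner m (monomial_coeffs \<beta>) g = cnj (g \<beta>) / complex_of_real (rho m \<beta>)"
proof -
  have "hinner m (monomial_coeffs \<beta>) g = infsum (hinner_term m (monomial_coeffs \<beta>) g) {\<beta>}"
    unfolding hinner_eq_infsum
    by (rule infsum_cong_neutral) (auto simp: hinner_term_def monomial_coeffs_def)
  then show ?thesis by (simp add: hinner_term_def monomial_coeffs_def)
qed

lemma hinner_ext:
  assumes m: "m \<ge> 1" and "\<And>f. f \<in> Hm m \<Longrightarrow> hinner m f k1 = hinner m f k2"
  shows "k1 = k2"
proof
  fix \<beta>
  have "cnj (k1 \<beta>) / complex_of_real (rho m \<beta>) = cnj (k2 \<beta>) / complex_of_real (rho m \<beta>)"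
    using assms(2)[OF Hm_monomial_coeffs[of \<beta>]] unfolding hinner_monomial_coeffs .
  then show "k1 \<beta> = k2 \<beta>" using rho_pos[OF m, of \<beta>] by simp
qed

section \<open>Shifts, degree multipliers and their adjoints\<close>

lemma Mz_apply: "Mz i f \<alpha> = (if 1 \<le> \<alpha> i then f (\<alpha>(i := \<alpha> i - 1)) else 0)"
proof -
  have "(\<forall>k. (if k = i then 1 else 0) \<le> \<alpha> k) = (1 \<le> \<alpha> i)" by auto
  moreover have "(\<lambda>k. \<alpha> k - (if k = i then 1 else 0)) = \<alpha>(i := \<alpha> i - 1)" by auto
  ultimately show ?thesis unfolding Mz_def Mzpow_def by simp
qed

lemma Mz_incr: "Mz i f (incr \<alpha> i) = f \<alpha>"
  by (simp add: Mz_apply)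

lemma Mrow_eq_0_at_0: "mabs \<alpha> = 0 \<Longrightarrow> Mrow F \<alpha> = 0"
  unfolding Mrow_def by (simp add: Mz_apply mabs_eq_0_component)

lemma Mrow_diff: "Mrow (F - H) = (\<lambda>\<alpha>. Mrow F \<alpha> - Mrow H \<alpha>)"
proof
  fix \<alpha>
  have "Mrow (F - H) \<alpha> = (\<Sum>i\<in>UNIV. Mz i (F i) \<alpha> - Mz i (H i) \<alpha>)"
    unfolding Mrow_def by (rule sum.cong) (auto simp: Mz_apply)
  then show "Mrow (F - H) \<alpha> = Mrow F \<alpha> - Mrow H \<alpha>" unfolding Mrow_def by (simp add: sum_subtractf)
qed

lemma Mzpow_Mzpow: "Mzpow a (Mzpow b h) = Mzpow (\<lambda>k. a k + b k) h"
proof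
  fix \<alpha>
  have "a i \<le> \<alpha> i \<and> b i \<le> \<alpha> i - a i \<longleftrightarrow> a i + b i \<le> \<alpha> i" for i by arith
  then have "(\<forall>i. a i \<le> \<alpha> i) \<and> (\<forall>i. b i \<le> \<alpha> i - a i) \<longleftrightarrow> (\<forall>i. a i + b i \<le> \<alpha> i)"
    by blast
  moreover have "(\<lambda>i. \<alpha> i - a i - b i) = (\<lambda>i. \<alpha> i - (a i + b i))" by (simp add: diff_diff_left)
  ultimately show "Mzpow a (Mzpow b h) \<alpha> = Mzpow (\<lambda>k. a k + b k) h \<alpha>"
    unfolding Mzpow_def by auto
qed

lemma Mz_Mzpow_commute: "Mz i (Mzpow \<gamma> h) = Mzpow \<gamma> (Mz i h)"
  unfolding Mz_def Mzpow_Mzpow by (simp add: add.commute)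

lemma sum_Mzpow: "(\<Sum>l\<in>I. Mzpow \<gamma> (h l) \<alpha>) = Mzpow \<gamma> (\<lambda>\<beta>. \<Sum>l\<in>I. h l \<beta>) \<alpha>"
  unfolding Mzpow_def by (simp del: not_all)

lemma Hm_Mzpow:
  assumes m: "m \<ge> 1" and f: "f \<in> Hm m"
  shows "Mzpow \<gamma> f \<in> Hm m"
proof (rule Hm_dominated[OF m f, where S = "{\<alpha>. \<forall>i. \<gamma> i \<le> \<alpha> i}" and \<phi> = "\<lambda>\<alpha> i. \<alpha> i - \<gamma> i" and C = 1])
  show "inj_on (\<lambda>\<alpha> i. \<alpha> i - \<gamma> i) {\<alpha>. \<forall>i. \<gamma> i \<le> \<alpha> i}"
  proof (rule inj_onI)
    fix x y assume "x \<in> {\<alpha>. \<forall>i. \<gamma> i \<le> \<alpha> i}" "y \<in> {\<alpha>. \<forall>i. \<gamma> i \<le> \<alpha> i}"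
      and eq: "(\<lambda>i. x i - \<gamma> i) = (\<lambda>i. y i - \<gamma> i)"
    then have "x i = y i" for i
    proof -
      have "\<gamma> i \<le> x i" "\<gamma> i \<le> y i" "x i - \<gamma> i = y i - \<gamma> i"
        using \<open>x \<in> _\<close> \<open>y \<in> _\<close> fun_cong[OF eq, of i] by auto
      then show ?thesis by arith
    qed
    then show "x = y" by auto
  qed
  show "Mzpow \<gamma> f \<alpha> = 0" if "\<alpha> \<notin> {\<alpha>. \<forall>i. \<gamma> i \<le> \<alpha> i}" for \<alpha>
    using that unfolding Mzpow_def by auto
  show "hnorm_term m (Mzpow \<gamma> f) \<alpha> \<le> 1 * hnorm_term m f (\<lambda>i. \<alpha> i - \<gamma> i)"
    if "\<alpha> \<in> {\<alpha>. \<forall>i. \<gamma> i \<le> \<alpha> i}" for \<alpha>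
  proof -
    have "(\<lambda>k. (\<alpha> k - \<gamma> k) + \<gamma> k) = \<alpha>" using that by auto
    then have "rho m (\<lambda>i. \<alpha> i - \<gamma> i) \<le> rho m \<alpha>"
      using rho_mono[OF m, of "\<lambda>i. \<alpha> i - \<gamma> i" \<gamma>] by simp
    moreover have "Mzpow \<gamma> f \<alpha> = f (\<lambda>i. \<alpha> i - \<gamma> i)" using that unfolding Mzpow_def by auto
    ultimately show ?thesis
      using rho_pos[OF m, of \<alpha>] rho_pos[OF m, of "\<lambda>i. \<alpha> i - \<gamma> i"] unfolding hnorm_term_def
      by (simp add: divide_left_mono)
  qed
qed

lemma Hm_Mz: "m \<ge> 1 \<Longrightarrow> f \<in> Hm m \<Longrightarrow> Mz i f \<in> Hm m"
  unfolding Mz_def by (rule Hm_Mzpow)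

lemma Hm_Mrow: "m \<ge> 1 \<Longrightarrow> F \<in> Hmn m \<Longrightarrow> Mrow F \<in> Hm m"
  unfolding Mrow_def Hmn_def by (rule Hm_sum) (auto intro: Hm_Mz)

definition degree_mult :: "(nat \<Rightarrow> complex) \<Rightarrow> 'n::finite coeffs \<Rightarrow> 'n coeffs" where
  "degree_mult w f \<alpha> = w (mabs \<alpha>) * f \<alpha>"

definition delta_weight :: "nat \<Rightarrow> nat \<Rightarrow> complex" where
  "delta_weight m k = (if k = 0 then 1 else of_nat (m + k - 1) / of_nat k)"

lemma delta_eq_degree_mult: "delta m = degree_mult (delta_weight m)"
  unfolding delta_def degree_mult_def delta_weight_def by (auto intro!: ext)

lemma Hm_degree_mult:
  assumes m: "m \<ge> 1" and f: "f \<in> Hm m" and w: "\<And>k. cmod (w k) \<le> C"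
  shows "degree_mult w f \<in> Hm m"
proof (rule Hm_dominated[OF m f, where S = UNIV and \<phi> = id and C = "C\<^sup>2"])
  show "hnorm_term m (degree_mult w f) \<alpha> \<le> C\<^sup>2 * hnorm_term m f (id \<alpha>)" for \<alpha>
  proof -
    have "(cmod (w (mabs \<alpha>)))\<^sup>2 \<le> C\<^sup>2" using w[of "mabs \<alpha>"] by (intro power_mono) auto
    then have "(cmod (w (mabs \<alpha>)))\<^sup>2 * (cmod (f \<alpha>))\<^sup>2 \<le> C\<^sup>2 * (cmod (f \<alpha>))\<^sup>2"
      by (intro mult_right_mono) auto
    then show ?thesis using rho_pos[OF m, of \<alpha>] unfolding hnorm_term_def degree_mult_def
      by (simp add: norm_mult power_mult_distrib divide_right_mono)
  qed
qed auto

lemma norm_delta_weight_le: "m \<ge> 1 \<Longrightarrow> cmod (delta_weight m k) \<le> m"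
proof (cases "k = 0")
  case False
  assume "m \<ge> 1"
  then have "m + k - 1 \<le> m * k"
    using False by (cases m; cases k) auto
  then have "real (m + k - 1) \<le> real m * real k"
    by (metis of_nat_le_iff of_nat_mult)
  then have "real (m + k - 1) / real k \<le> m" using False by (simp add: divide_le_eq)
  moreover have "delta_weight m k = complex_of_real (real (m + k - 1) / real k)"
    using False unfolding delta_weight_def by simp
  ultimately show ?thesis by (simp add: norm_divide)
qed (simp add: delta_weight_def)

lemma Hm_delta: "m \<ge> 1 \<Longrightarrow> f \<in> Hm m \<Longrightarrow> delta m f \<in> Hm m"
  unfolding delta_eq_degree_mult by (rule Hm_degree_mult[OF _ _ norm_delta_weight_le])

lemma hinner_degree_mult_real:
  assumes "\<And>k. cnj (w k) = w k"
  shows "hinner m (degree_mult w f) g = hinner m f (degree_mult w g)"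
proof -
  have "hinner_term m (degree_mult w f) g = hinner_term m f (degree_mult w g)"
    unfolding hinner_term_def degree_mult_def by (auto intro!: ext simp: assms)
  then show ?thesis unfolding hinner_eq_infsum by simp
qed

lemma hinner_delta: "hinner m (delta m f) g = hinner m f (delta m g)"
  unfolding delta_eq_degree_mult by (rule hinner_degree_mult_real) (simp add: delta_weight_def)

text \<open>M_{z_i}^* in coefficients; the factor is rho m alpha / rho m (alpha + e_i), see rho_incr.\<close>
definition backshift :: "nat \<Rightarrow> 'n::finite \<Rightarrow> 'n coeffs \<Rightarrow> 'n coeffs" where
  "backshift m i f \<alpha> = f (incr \<alpha> i) * of_nat (Suc (\<alpha> i)) / of_nat (m + mabs \<alpha>)"

lemma Hm_backshift:
  assumes m: "m \<ge> 1" and f: "f \<in> Hm m"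
  shows "backshift m i f \<in> Hm m"
proof (rule Hm_dominated[OF m f, where S = UNIV and \<phi> = "\<lambda>\<alpha>. incr \<alpha> i" and C = 1])
  show "inj_on (\<lambda>\<alpha>. incr \<alpha> i) UNIV" using inj_incr .
  show "hnorm_term m (backshift m i f) \<alpha> \<le> 1 * hnorm_term m f (incr \<alpha> i)" for \<alpha>
  proof -
    define a where "a = real (Suc (\<alpha> i))"
    define b where "b = real (m + mabs \<alpha>)"
    define c where "c = (cmod (f (incr \<alpha> i)))\<^sup>2"
    have ab: "0 < a" "a \<le> b" using mabs_ge_component[of \<alpha> i] m unfolding a_def b_def by auto
    have r: "rho m \<alpha> > 0" "rho m (incr \<alpha> i) > 0" using rho_pos[OF m] by auto
    have rr: "rho m (incr \<alpha> i) * a = rho m \<alpha> * b" unfolding a_def b_def using rho_incr[OF m] by simp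
    have "hnorm_term m (backshift m i f) \<alpha> = c * a\<^sup>2 / b\<^sup>2 / rho m \<alpha>"
      unfolding hnorm_term_def backshift_def c_def a_def b_def
      by (simp add: norm_mult norm_divide power_mult_distrib power_divide del: of_nat_Suc of_nat_add)
    also have "\<dots> = c / rho m (incr \<alpha> i) * (a / b)"
      using ab r rr by (simp add: field_simps power2_eq_square)
    also have "\<dots> \<le> c / rho m (incr \<alpha> i) * 1"
      using ab r by (intro mult_left_mono) (auto simp: c_def)
    finally show ?thesis unfolding hnorm_term_def c_def by simp
  qed
qed auto

lemma hinner_Mz_backshift:
  assumes m: "m \<ge> 1" and f: "f \<in> Hm m" and h: "h \<in> Hm m"
  shows "hinner m (Mz i f) h = hinner m f (backshift m i h)"
proof -
  have "hinner m (Mz i f) h = infsum (hinner_term m (Mz i f) h) (range (\<lambda>\<beta>. incr \<beta> i))"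
    unfolding hinner_eq_infsum
    by (rule infsum_cong_neutral) (auto simp: hinner_term_def Mz_apply dest: not_in_range_incr)
  also have "\<dots> = infsum (hinner_term m (Mz i f) h \<circ> (\<lambda>\<beta>. incr \<beta> i)) UNIV"
    by (rule infsum_reindex[OF inj_incr])
  also have "hinner_term m (Mz i f) h \<circ> (\<lambda>\<beta>. incr \<beta> i) = hinner_term m f (backshift m i h)"
  proof
    fix \<beta>
    define a where "a = real (Suc (\<beta> i))"
    define b where "b = real (m + mabs \<beta>)"
    have "a > 0" "b > 0" using m unfolding a_def b_def by auto
    moreover have "rho m (incr \<beta> i) * a = rho m \<beta> * b"
      unfolding a_def b_def using rho_incr[OF m] by simp
    ultimately have "1 / rho m (incr \<beta> i) = a / (b * rho m \<beta>)"
      using rho_pos[OF m, of \<beta>] rho_pos[OF m, of "incr \<beta> i"] by (simp add: field_simps)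
    then have weight: "1 / complex_of_real (rho m (incr \<beta> i))
        = complex_of_real a / (complex_of_real b * complex_of_real (rho m \<beta>))"
      by (metis of_real_1 of_real_divide of_real_mult)
    have "(hinner_term m (Mz i f) h \<circ> (\<lambda>\<beta>. incr \<beta> i)) \<beta>
        = f \<beta> * cnj (h (incr \<beta> i)) * (1 / complex_of_real (rho m (incr \<beta> i)))"
      unfolding hinner_term_def o_def Mz_incr by simp
    also have "\<dots> = hinner_term m f (backshift m i h) \<beta>"
      unfolding weight hinner_term_def backshift_def a_def b_def by simp
    finally show "(hinner_term m (Mz i f) h \<circ> (\<lambda>\<beta>. incr \<beta> i)) \<beta> = hinner_term m f (backshift m i h) \<beta>" .
  qed
  finally show ?thesis unfolding hinner_eq_infsum .
qed

lemma Mz_adj_eq_backshift: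
  assumes m: "m \<ge> 1" and h: "h \<in> Hm m"
  shows "Mz_adj m i h = backshift m i h"
  unfolding Mz_adj_def adjoint_def
proof (rule the_equality)
  show "backshift m i h \<in> Hm m \<and> (\<forall>f\<in>Hm m. hinner m (Mz i f) h = hinner m f (backshift m i h))"
    using Hm_backshift[OF m h] hinner_Mz_backshift[OF m _ h] by auto
  fix k assume "k \<in> Hm m \<and> (\<forall>f\<in>Hm m. hinner m (Mz i f) h = hinner m f k)"
  then show "k = backshift m i h"
    by (intro hinner_ext[OF m]) (auto simp: hinner_Mz_backshift[OF m _ h])
qed

lemma hinner_Mrow:
  assumes m: "m \<ge> 1" and F: "F \<in> Hmn m" and h: "h \<in> Hm m"
  shows "hinner m (Mrow F) h = hinner_n m F (\<lambda>i. backshift m i h)"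
proof -
  have "hinner m (Mrow F) h = (\<Sum>i\<in>UNIV. hinner m (Mz i (F i)) h)"
    unfolding Mrow_def by (rule hinner_sum_left[OF m _ _ h]) (use F Hm_Mz[OF m] in \<open>auto simp: Hmn_def\<close>)
  also have "\<dots> = hinner_n m F (\<lambda>i. backshift m i h)"
    unfolding hinner_n_def using F hinner_Mz_backshift[OF m _ h] by (simp add: Hmn_def)
  finally show ?thesis .
qed

lemma Mz_degree_mult: "Mz l (degree_mult w g) \<alpha> = w (mabs \<alpha> - 1) * Mz l g \<alpha>"
  using mabs_decr[of \<alpha> l] by (simp add: Mz_apply degree_mult_def)

lemma sum_Mz_backshift:
  "(\<Sum>l\<in>UNIV. Mz l (backshift m l v) \<alpha>) = v \<alpha> * of_nat (mabs \<alpha>) / of_nat (m + mabs \<alpha> - 1)"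
proof -
  have "Mz l (backshift m l v) \<alpha> = v \<alpha> * of_nat (\<alpha> l) / of_nat (m + mabs \<alpha> - 1)" for l
  proof (cases "1 \<le> \<alpha> l")
    case True
    then have "m + mabs (\<alpha>(l := \<alpha> l - 1)) = m + mabs \<alpha> - 1"
      using mabs_decr[of \<alpha> l] mabs_ge_component[of \<alpha> l] by simp
    with True show ?thesis unfolding Mz_apply backshift_def by simp
  qed (simp add: Mz_apply)
  then show ?thesis unfolding mabs_def
    by (simp add: sum_divide_distrib[symmetric] sum_distrib_left[symmetric])
qed

section \<open>The direct sum H_m^n and the projection onto the range of M_z^*\<close>

definition hnorm_sq_n :: "nat \<Rightarrow> ('n::finite \<Rightarrow> 'n coeffs) \<Rightarrow> real" where
  "hnorm_sq_n m F = (\<Sum>i\<in>UNIV. hnorm_sq m (F i))"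

lemma Hmn_diff: "m \<ge> 1 \<Longrightarrow> F \<in> Hmn m \<Longrightarrow> H \<in> Hmn m \<Longrightarrow> F - H \<in> Hmn m"
  unfolding Hmn_def fun_diff_def by (auto intro!: Hm_diff)

lemma hinner_n_diff_left:
  assumes m: "m \<ge> 1" and "F \<in> Hmn m" "G \<in> Hmn m" "H \<in> Hmn m"
  shows "hinner_n m (F - G) H = hinner_n m F H - hinner_n m G H"
  using assms unfolding hinner_n_def fun_diff_def Hmn_def
  by (simp add: hinner_diff_left[OF m] sum_subtractf)

lemma hinner_n_diff_right:
  assumes m: "m \<ge> 1" and "F \<in> Hmn m" "G \<in> Hmn m" "H \<in> Hmn m"
  shows "hinner_n m F (G - H) = hinner_n m F G - hinner_n m F H"
  using assms unfolding hinner_n_def fun_diff_def Hmn_def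
  by (simp add: hinner_diff_right[OF m] sum_subtractf)

lemma hnorm_sq_n_nonneg: "m \<ge> 1 \<Longrightarrow> hnorm_sq_n m F \<ge> 0"
  unfolding hnorm_sq_n_def by (intro sum_nonneg hnorm_sq_nonneg)

lemma Re_hinner_n_self: "F \<in> Hmn m \<Longrightarrow> Re (hinner_n m F F) = hnorm_sq_n m F"
  unfolding hinner_n_def hnorm_sq_n_def Hmn_def by (simp add: hinner_self)

lemma hinner_n_bound:
  assumes m: "m \<ge> 1" and "F \<in> Hmn m" "G \<in> Hmn m" and c: "c > 0"
  shows "cmod (hinner_n m F G) \<le> c / 2 * hnorm_sq_n m F + 1 / (2 * c) * hnorm_sq_n m G"
proof -
  have "cmod (hinner_n m F G) \<le> (\<Sum>i\<in>UNIV. cmod (hinner m (F i) (G i)))"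
    unfolding hinner_n_def by (rule norm_sum)
  also have "\<dots> \<le> (\<Sum>i\<in>UNIV. c / 2 * hnorm_sq m (F i) + 1 / (2 * c) * hnorm_sq m (G i))"
    using assms by (intro sum_mono hinner_bound[OF m _ _ c]) (auto simp: Hmn_def)
  also have "\<dots> = c / 2 * hnorm_sq_n m F + 1 / (2 * c) * hnorm_sq_n m G"
    unfolding hnorm_sq_n_def by (simp add: sum_distrib_left sum.distrib)
  finally show ?thesis .
qed

lemma hnorm_sq_n_eq_0:
  assumes m: "m \<ge> 1" and F: "F \<in> Hmn m" and "hnorm_sq_n m F = 0"
  shows "F = (\<lambda>_ _. 0)"
proof
  fix i
  have "hnorm_sq m (F i) = 0"
    using assms(3) unfolding hnorm_sq_n_def
    by (subst (asm) sum_nonneg_eq_0_iff) (auto intro: hnorm_sq_nonneg[OF m])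
  then show "F i = (\<lambda>_. 0)" using hnorm_sq_eq_0[OF m] F unfolding Hmn_def by auto
qed

lemma hinner_n_ext:
  fixes K1 K2 :: "'n::finite \<Rightarrow> 'n coeffs"
  assumes m: "m \<ge> 1" and "\<And>F. F \<in> Hmn m \<Longrightarrow> hinner_n m F K1 = hinner_n m F K2"
  shows "K1 = K2"
proof
  fix i
  show "K1 i = K2 i"
  proof (rule hinner_ext[OF m])
    fix f :: "'n coeffs" assume f: "f \<in> Hm m"
    define F :: "'n \<Rightarrow> 'n coeffs" where "F j = (if j = i then f else (\<lambda>_. 0))" for j
    have "F \<in> Hmn m" unfolding Hmn_def F_def using f Hm_zero by auto
    moreover have "hinner_n m F K = hinner m f (K i)" for K :: "'n \<Rightarrow> 'n coeffs"
    proof -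
      have "hinner_n m F K = (\<Sum>j\<in>UNIV. if j = i then hinner m f (K j) else 0)"
        unfolding hinner_n_def F_def by (rule sum.cong) (auto simp: hinner_zero_left)
      then show ?thesis by simp
    qed
    ultimately show "hinner m f (K1 i) = hinner m f (K2 i)" using assms(2) by metis
  qed
qed

lemma Mrow'_adj_eq:
  assumes m: "m \<ge> 1" and g: "g \<in> Hm m"
  shows "Mrow'_adj m g = (\<lambda>i. backshift m i (delta m g))"
  unfolding Mrow'_adj_def adjoint_def
proof (rule the_equality)
  have dg: "delta m g \<in> Hm m" by (rule Hm_delta[OF m g])
  have adj: "hinner m (Mrow' m F) g = hinner_n m F (\<lambda>i. backshift m i (delta m g))"
    if "F \<in> Hmn m" for F
    unfolding Mrow'_def hinner_delta by (rule hinner_Mrow[OF m that dg])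
  show "(\<lambda>i. backshift m i (delta m g)) \<in> Hmn m \<and>
      (\<forall>F\<in>Hmn m. hinner m (Mrow' m F) g = hinner_n m F (\<lambda>i. backshift m i (delta m g)))"
    using Hm_backshift[OF m dg] adj unfolding Hmn_def by auto
  fix K assume "K \<in> Hmn m \<and> (\<forall>F\<in>Hmn m. hinner m (Mrow' m F) g = hinner_n m F K)"
  then show "K = (\<lambda>i. backshift m i (delta m g))"
    by (intro hinner_n_ext[OF m]) (auto simp: adj)
qed

lemma hinner_n_orthogonal_ipclosure:
  assumes m: "m \<ge> 1" and X: "X \<in> Hmn m" and V: "V \<subseteq> Hmn m"
    and orth: "\<And>W. W \<in> V \<Longrightarrow> hinner_n m X W = 0"
    and Y: "Y \<in> ipclosure (Hmn m) (hinner_n m) V"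
  shows "hinner_n m X Y = 0"
proof -
  define K where "K = hnorm_sq_n m X"
  have K: "K \<ge> 0" unfolding K_def by (rule hnorm_sq_n_nonneg[OF m])
  have YH: "Y \<in> Hmn m" using Y unfolding ipclosure_def by auto
  have bound: "cmod (hinner_n m X Y) \<le> e * (K + 1) / 2" if e: "e > 0" for e
  proof -
    obtain W where W: "W \<in> V" and close: "sqrt (Re (hinner_n m (Y - W) (Y - W))) < e"
      using Y e unfolding ipclosure_def by blast
    have DH: "Y - W \<in> Hmn m" using Hmn_diff[OF m YH] W V by auto
    have "sqrt (hnorm_sq_n m (Y - W)) < e" using close Re_hinner_n_self[OF DH] by simp
    then have "(sqrt (hnorm_sq_n m (Y - W)))\<^sup>2 < e\<^sup>2"
      using hnorm_sq_n_nonneg[OF m, of "Y - W"] by (intro power_strict_mono) auto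
    then have "hnorm_sq_n m (Y - W) < e\<^sup>2"
      using hnorm_sq_n_nonneg[OF m, of "Y - W"] by simp
    have "hinner_n m X Y = hinner_n m X (Y - W)"
      using hinner_n_diff_right[OF m X YH] W V orth[OF W] by auto
    also have "cmod \<dots> \<le> e / 2 * K + 1 / (2 * e) * hnorm_sq_n m (Y - W)"
      unfolding K_def by (rule hinner_n_bound[OF m X DH e])
    also have "\<dots> \<le> e / 2 * K + 1 / (2 * e) * e\<^sup>2"
      using \<open>hnorm_sq_n m (Y - W) < e\<^sup>2\<close> e by (intro add_left_mono mult_left_mono) auto
    also have "\<dots> = e * (K + 1) / 2" using e by (simp add: power2_eq_square field_simps)
    finally show ?thesis .
  qed
  show ?thesis
  proof (rule ccontr)
    assume "hinner_n m X Y \<noteq> 0"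
    then have pos: "cmod (hinner_n m X Y) > 0" by simp
    have "cmod (hinner_n m X Y) \<le> cmod (hinner_n m X Y) / (K + 1) * (K + 1) / 2"
      using pos K by (intro bound) simp
    then show False using pos K by simp
  qed
qed

lemma oproj_Hmn_eqI:
  assumes m: "m \<ge> 1" and X: "X \<in> Hmn m" and V: "V \<subseteq> Hmn m" and P: "P \<in> V"
    and orth: "\<And>W. W \<in> V \<Longrightarrow> hinner_n m (X - P) W = 0"
  shows "oproj (Hmn m) (hinner_n m) V X = P"
  unfolding oproj_def
proof (rule the_equality)
  let ?C = "ipclosure (Hmn m) (hinner_n m) V"
  have PH: "P \<in> Hmn m" using P V by auto
  have "hinner_n m (P - P) (P - P) = 0"
    unfolding hinner_n_def fun_diff_def by (simp add: hinner_zero_left)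
  then have PC: "P \<in> ?C"
    using PH P unfolding ipclosure_def by (auto intro!: bexI[of _ P])
  have orthC: "hinner_n m (X - P) W = 0" if "W \<in> ?C" for W
    by (rule hinner_n_orthogonal_ipclosure[OF m Hmn_diff[OF m X PH] V orth that])
  show "P \<in> ?C \<and> (\<forall>W\<in>?C. hinner_n m (X - P) W = 0)" using PC orthC by auto
  fix Q assume Q: "Q \<in> ?C \<and> (\<forall>W\<in>?C. hinner_n m (X - Q) W = 0)"
  then have QH: "Q \<in> Hmn m" unfolding ipclosure_def by auto
  have XP: "X - P \<in> Hmn m" and XQ: "X - Q \<in> Hmn m" and QP: "Q - P \<in> Hmn m"
    using Hmn_diff[OF m] X PH QH by auto
  have "hinner_n m (Q - P) (Q - P) = hinner_n m ((X - P) - (X - Q)) (Q - P)"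
    by (simp add: fun_diff_def)
  also have "\<dots> = (hinner_n m (X - P) Q - hinner_n m (X - P) P) - (hinner_n m (X - Q) Q - hinner_n m (X - Q) P)"
    by (simp add: hinner_n_diff_left[OF m XP XQ QP] hinner_n_diff_right[OF m _ QH PH] XP XQ)
  also have "\<dots> = 0" using Q PC orthC by auto
  finally have "hnorm_sq_n m (Q - P) = 0" using Re_hinner_n_self[OF QP] by simp
  then have "Q - P = (\<lambda>_ _. 0)" by (rule hnorm_sq_n_eq_0[OF m QP])
  then show "Q = P" by (simp add: fun_diff_def fun_eq_iff)
qed

text \<open>sum_l M_{z_l} M_{z_l}^* multiplies the coefficient at alpha by |alpha| / (m + |alpha| - 1),
  the inverse of the weight of delta.\<close>
lemma Mrow_backshift_delta:
  assumes m: "m \<ge> 1" and u0: "\<And>\<alpha>. mabs \<alpha> = 0 \<Longrightarrow> u \<alpha> = 0"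
  shows "Mrow (\<lambda>l. backshift m l (delta m u)) = u"
proof
  fix \<alpha>
  show "Mrow (\<lambda>l. backshift m l (delta m u)) \<alpha> = u \<alpha>"
  proof (cases "mabs \<alpha> = 0")
    case True
    then show ?thesis using u0 by (simp add: Mrow_eq_0_at_0)
  next
    case False
    then have "m + mabs \<alpha> - 1 \<noteq> 0" using m by simp
    then have "of_nat (m + mabs \<alpha> - 1) \<noteq> (0::complex)" "of_nat (mabs \<alpha>) \<noteq> (0::complex)"
      using False by (simp_all only: of_nat_eq_0_iff not_False_eq_True)
    then show ?thesis
      using False unfolding Mrow_def sum_Mz_backshift delta_def by simp
  qed
qed

lemma P_ImMzstar_eq:
  fixes G :: "'n::finite \<Rightarrow> 'n coeffs"
  assumes m: "m \<ge> 1" and G: "G \<in> Hmn m"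
  shows "P_ImMzstar m G = (\<lambda>i. backshift m i (delta m (Mrow G)))"
proof -
  have Mz_star_eq: "Mz_star m g = (\<lambda>i. backshift m i g)" if "g \<in> Hm m" for g
    unfolding Mz_star_def using Mz_adj_eq_backshift[OF m that] by simp
  have u: "delta m (Mrow G) \<in> Hm m" by (rule Hm_delta[OF m Hm_Mrow[OF m G]])
  show ?thesis
    unfolding P_ImMzstar_def
  proof (rule oproj_Hmn_eqI[OF m G])
    show "Mz_star m ` Hm m \<subseteq> Hmn m"
      using Hm_backshift[OF m] by (auto simp: Mz_star_eq Hmn_def)
    show "(\<lambda>i. backshift m i (delta m (Mrow G))) \<in> Mz_star m ` Hm m"
      using u Mz_star_eq[OF u] by (metis image_eqI)
    fix W :: "'n \<Rightarrow> 'n coeffs" assume "W \<in> Mz_star m ` Hm m"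
    then obtain g where g: "g \<in> Hm m" and W: "W = (\<lambda>i. backshift m i g)"
      using Mz_star_eq by auto
    have "(\<lambda>i. backshift m i (delta m (Mrow G))) \<in> Hmn m"
      using Hm_backshift[OF m u] by (simp add: Hmn_def)
    then have GP: "G - (\<lambda>i. backshift m i (delta m (Mrow G))) \<in> Hmn m"
      by (rule Hmn_diff[OF m G])
    have "Mrow (\<lambda>i. backshift m i (delta m (Mrow G))) = Mrow G"
      by (rule Mrow_backshift_delta[OF m Mrow_eq_0_at_0])
    then have "Mrow (G - (\<lambda>i. backshift m i (delta m (Mrow G)))) = (\<lambda>_. 0)"
      unfolding Mrow_diff by simp
    then show "hinner_n m (G - (\<lambda>i. backshift m i (delta m (Mrow G)))) W = 0"
      using hinner_Mrow[OF m GP g] unfolding W by (simp add: hinner_zero_left)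
  qed
qed

section \<open>The weights of sigma^j(M_z^gamma)\<close>

text \<open>The degree weight of sum_l M_{z_l} D_w M_{z_l}^*, where D_w is multiplication by w(|alpha|).\<close>
definition sigma_mult :: "nat \<Rightarrow> (nat \<Rightarrow> complex) \<Rightarrow> nat \<Rightarrow> complex" where
  "sigma_mult m w k = (if k = 0 then 0 else w (k - 1) * of_nat k / of_nat (m + k - 1))"

primrec sigma_weight :: "nat \<Rightarrow> nat \<Rightarrow> nat \<Rightarrow> complex" where
  "sigma_weight m 0 = (\<lambda>_. 1)"
| "sigma_weight m (Suc j) = sigma_mult m (sigma_weight m j)"

definition binsum_weight :: "nat \<Rightarrow> nat \<Rightarrow> complex" where
  "binsum_weight m k = (\<Sum>j<m. (-1)^j * of_nat (m choose (j + 1)) * sigma_weight m j k)"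

lemma sigma_weight_eq:
  assumes m: "m \<ge> 1"
  shows "sigma_weight m j k = of_nat (k choose j) / of_nat ((m + k - 1) choose j)"
proof (induction j arbitrary: k)
  case 0 then show ?case by simp
next
  case (Suc j)
  show ?case
  proof (cases k)
    case 0 then show ?thesis by (simp add: sigma_mult_def)
  next
    case (Suc k')
    define n where "n = m + k' - 1"
    have n: "Suc n = m + k'" unfolding n_def using m by simp
    have b1: "of_nat (Suc j) * of_nat (Suc k' choose Suc j) = (of_nat (Suc k') * of_nat (k' choose j) :: complex)"
      using Suc_times_binomial[of j k'] by (metis of_nat_mult)
    have b2: "of_nat (Suc j) * of_nat (Suc n choose Suc j) = (of_nat (Suc n) * of_nat (n choose j) :: complex)"
      using Suc_times_binomial[of j n] by (metis of_nat_mult)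
    have "sigma_weight m (Suc j) k = of_nat (k' choose j) / of_nat (n choose j) * of_nat (Suc k') / of_nat (Suc n)"
      unfolding sigma_weight.simps sigma_mult_def Suc.IH using Suc n by (simp add: n_def)
    also have "\<dots> = of_nat (Suc k' choose Suc j) / of_nat (Suc n choose Suc j)"
    proof (cases "n choose j = 0")
      case True
      moreover have "Suc n choose Suc j = 0" using True by simp
      ultimately show ?thesis by (simp only: of_nat_0 div_by_0 mult_zero_left div_0)
    next
      case False
      have solve: "\<And>s x y. (s::complex) \<noteq> 0 \<Longrightarrow> s * x = y \<Longrightarrow> x = y / s" by (simp add: field_simps)
      have s0: "of_nat (Suc j) \<noteq> (0::complex)" by (rule of_nat_neq_0)
      have g: "\<And>a b c d s. (s::complex) \<noteq> 0 \<Longrightarrow> d \<noteq> 0 \<Longrightarrow> c \<noteq> 0 \<Longrightarrow> b / d * a / c = (a * b / s) / (c * d / s)"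
        by (simp add: field_simps)
      have "of_nat (n choose j) \<noteq> (0::complex)" "of_nat (Suc n) \<noteq> (0::complex)"
        using False by (simp_all only: of_nat_eq_0_iff) simp
      then show ?thesis unfolding solve[OF s0 b1] solve[OF s0 b2] by (rule g[OF s0])
    qed
    moreover have "m + Suc k' - 1 = Suc n" using n by simp
    ultimately show ?thesis unfolding Suc by (simp only:)
  qed
qed

lemma norm_sigma_weight_le: "m \<ge> 1 \<Longrightarrow> cmod (sigma_weight m j k) \<le> 1"
proof (induction j arbitrary: k)
  case (Suc j)
  show ?case
  proof (cases "k = 0")
    case False
    have "sigma_weight m (Suc j) k = sigma_weight m j (k - 1) * (of_nat k / of_nat (m + k - 1))"
      using False by (simp add: sigma_mult_def)
    then have "cmod (sigma_weight m (Suc j) k) = cmod (sigma_weight m j (k - 1)) * (real k / real (m + k - 1))"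
      by (simp only: norm_mult norm_divide norm_of_nat)
    also have "\<dots> \<le> 1 * 1"
      using Suc False by (intro mult_mono) auto
    finally show ?thesis by simp
  qed (simp add: sigma_mult_def)
qed simp

lemma norm_binsum_weight_le: "m \<ge> 1 \<Longrightarrow> cmod (binsum_weight m k) \<le> (\<Sum>j<m. real (m choose (j + 1)))"
  unfolding binsum_weight_def
  by (rule order_trans[OF norm_sum sum_mono])
    (simp add: norm_mult norm_power mult_left_le norm_sigma_weight_le)

text \<open>The coefficient of x^k in (1 - x)^m (1 - x)^(-m) = 1.\<close>
lemma alternating_Vandermonde:
  assumes k: "k \<ge> 1" and m: "m \<ge> 1"
  shows "(\<Sum>j\<le>k. (-1)^j * of_nat (m choose j) * of_nat ((m + k - 1 - j) choose (k - j)) :: complex) = 0"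
proof -
  have Vandermonde: "(\<Sum>j\<in>{0..k}. ((of_nat m :: complex) gchoose j) * ((- of_nat m) gchoose (k - j))) = 0"
    using gbinomial_Vandermonde[of "of_nat m :: complex" "- of_nat m" k] k by (simp add: gbinomial_0_left)
  have negated_upper: "((- of_nat m :: complex) gchoose (k - j)) = (-1)^(k-j) * of_nat ((m + k - 1 - j) choose (k - j))"
    if j: "j \<le> k" for j
  proof -
    have e: "(of_nat (k - j) - (- of_nat m) - 1 :: complex) = of_nat (m + k - 1 - j)"
      using j m by (simp add: of_nat_diff)
    show ?thesis using gbinomial_negated_upper[of "- of_nat m :: complex" "k - j"]
      unfolding e binomial_gbinomial by simp
  qed
  have sign: "(-1::complex)^k * (-1)^(k-j) = (-1)^j" if j: "j \<le> k" for j
  proof -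
    have "(-1::complex)^k * (-1)^(k-j) = (-1)^(k + (k-j))" by (simp add: power_add)
    also have "k + (k - j) = j + 2 * (k - j)" using j by simp
    also have "(-1::complex)^(j + 2 * (k - j)) = (-1)^j * ((-1)^2)^(k-j)" by (simp only: power_add power_mult)
    also have "\<dots> = (-1)^j" by simp
    finally show ?thesis .
  qed
  have "(\<Sum>j\<le>k. (-1)^j * of_nat (m choose j) * of_nat ((m + k - 1 - j) choose (k - j)) :: complex)
      = (-1)^k * (\<Sum>j\<in>{0..k}. ((of_nat m :: complex) gchoose j) * ((- of_nat m) gchoose (k - j)))"
    unfolding sum_distrib_left atLeast0AtMost
  proof (rule sum.cong)
    fix j assume "j \<in> {..k}"
    then have j: "j \<le> k" by simp
    have "(-1::complex)^k * ((of_nat m gchoose j) * ((- of_nat m) gchoose (k - j)))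
        = ((-1)^k * (-1)^(k-j)) * of_nat (m choose j) * of_nat ((m + k - 1 - j) choose (k - j))"
      unfolding negated_upper[OF j] binomial_gbinomial by (simp only: mult_ac)
    also have "\<dots> = (-1)^j * of_nat (m choose j) * of_nat ((m + k - 1 - j) choose (k - j))"
      unfolding sign[OF j] ..
    finally show "(-1)^j * of_nat (m choose j) * of_nat ((m + k - 1 - j) choose (k - j))
        = (-1::complex)^k * ((of_nat m gchoose j) * ((- of_nat m) gchoose (k - j)))" by simp
  qed simp
  then show ?thesis using Vandermonde by simp
qed

lemma sum_binomial_sigma_weight:
  assumes m: "m \<ge> 1" and k: "k \<ge> 1"
  shows "(\<Sum>j<m. (-1)^j * of_nat (m choose (j + 1)) * sigma_weight m (Suc j) k) = 1"
proof -
  define M where "M = m + k - 1"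
  define t :: "nat \<Rightarrow> complex" where
    "t j = (-1)^j * of_nat (m choose j) * (of_nat (k choose j) / of_nat (M choose j))" for j
  have kM: "k \<le> M" unfolding M_def using m by simp
  have "(\<Sum>j\<le>m. t j) = (\<Sum>j\<le>m + k. t j)"
    by (rule sum.mono_neutral_left) (auto simp: t_def)
  also have "\<dots> = (\<Sum>j\<le>k. t j)"
    by (rule sum.mono_neutral_right) (auto simp: t_def)
  also have "\<dots> = (\<Sum>j\<le>k. (-1)^j * of_nat (m choose j) * of_nat ((m + k - 1 - j) choose (k - j))) / of_nat (M choose k)"
    unfolding sum_divide_distrib
  proof (rule sum.cong)
    fix j assume "j \<in> {..k}"
    then have j: "j \<le> k" by simp
    have "(of_nat (M choose k) :: complex) * of_nat (k choose j) = of_nat (M choose j) * of_nat ((M - j) choose (k - j))"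
      using choose_mult[OF j kM] by (metis of_nat_mult)
    moreover have "M choose j \<noteq> 0" "M choose k \<noteq> 0" using j kM by auto
    ultimately have "of_nat (k choose j) / of_nat (M choose j) = (of_nat ((M - j) choose (k - j)) / of_nat (M choose k) :: complex)"
      by (simp add: field_simps)
    then show "t j = (-1)^j * of_nat (m choose j) * of_nat ((m + k - 1 - j) choose (k - j)) / of_nat (M choose k)"
      unfolding t_def M_def by simp
  qed simp
  also have "\<dots> = 0" using alternating_Vandermonde[OF k m] by simp
  finally have "(\<Sum>j\<le>m. t j) = 0" .
  moreover obtain m' where "m = Suc m'" using m by (cases m) auto
  then have "(\<Sum>j\<le>m. t j) = t 0 + (\<Sum>j<m. t (Suc j))"
    by (simp only: sum.atMost_Suc_shift lessThan_Suc_atMost)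
  moreover have "t 0 = 1" unfolding t_def by simp
  moreover have "(\<Sum>j<m. t (Suc j)) = - (\<Sum>j<m. (-1)^j * of_nat (m choose (j + 1)) * sigma_weight m (Suc j) k)"
    unfolding sum_negf[symmetric] t_def sigma_weight_eq[OF m] M_def by (rule sum.cong) auto
  ultimately show ?thesis by (simp add: eq_neg_iff_add_eq_0)
qed

lemma sigma_mult_binsum_weight:
  assumes m: "m \<ge> 1" and k: "k \<ge> 1"
  shows "sigma_mult m (binsum_weight m) k = 1"
proof -
  have "sigma_mult m (binsum_weight m) k
      = (\<Sum>j<m. (-1)^j * of_nat (m choose (j + 1)) * sigma_mult m (sigma_weight m j) k)"
    using k unfolding sigma_mult_def binsum_weight_def by (simp add: sum_distrib_right sum_divide_distrib mult.assoc)
  also have "\<dots> = 1" using sum_binomial_sigma_weight[OF m k] by simp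
  finally show ?thesis .
qed

section \<open>sigma^j(M_z^gamma) as M_z^gamma times a degree multiplier\<close>

lemma sum_Mz_degree_mult_backshift:
  "(\<lambda>\<beta>. \<Sum>l\<in>UNIV. Mz l (degree_mult w (backshift m l f)) \<beta>) = degree_mult (sigma_mult m w) f"
proof
  fix \<beta>
  have "(\<Sum>l\<in>UNIV. Mz l (degree_mult w (backshift m l f)) \<beta>)
      = w (mabs \<beta> - 1) * (f \<beta> * of_nat (mabs \<beta>) / of_nat (m + mabs \<beta> - 1))"
    unfolding Mz_degree_mult sum_distrib_left[symmetric] sum_Mz_backshift ..
  then show "(\<Sum>l\<in>UNIV. Mz l (degree_mult w (backshift m l f)) \<beta>) = degree_mult (sigma_mult m w) f \<beta>"
    unfolding degree_mult_def sigma_mult_def by simp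
qed

lemma Mrow_Mzpow_degree_mult_backshift:
  "Mrow (\<lambda>l. Mzpow \<gamma> (degree_mult w (backshift m l f))) = Mzpow \<gamma> (degree_mult (sigma_mult m w) f)"
  unfolding Mrow_def Mz_Mzpow_commute sum_Mzpow sum_Mz_degree_mult_backshift ..

lemma sigma_Mzpow_degree_mult:
  assumes m: "m \<ge> 1" and Y: "\<And>g. g \<in> Hm m \<Longrightarrow> Y g = Mzpow \<gamma> (degree_mult w g)" and f: "f \<in> Hm m"
  shows "sigma m Y f = Mzpow \<gamma> (degree_mult (sigma_mult m w) f)"
proof -
  have "sigma m Y f = Mrow (\<lambda>l. Mzpow \<gamma> (degree_mult w (backshift m l f)))"
    unfolding sigma_def Mrow_def using Mz_adj_eq_backshift[OF m f] Y[OF Hm_backshift[OF m f]] by simp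
  then show ?thesis unfolding Mrow_Mzpow_degree_mult_backshift .
qed

lemma sigma_iterate_Mzpow:
  assumes m: "m \<ge> 1" and f: "f \<in> Hm m"
  shows "(sigma m ^^ j) (Mzpow \<gamma>) f = Mzpow \<gamma> (degree_mult (sigma_weight m j) f)"
  using f
proof (induction j arbitrary: f)
  case 0 then show ?case by (simp add: degree_mult_def)
next
  case (Suc j)
  show ?case unfolding funpow.simps o_def sigma_weight.simps
    by (rule sigma_Mzpow_degree_mult[OF m Suc.IH Suc.prems])
qed

lemma binsum_Mzpow:
  assumes m: "m \<ge> 1" and f: "f \<in> Hm m"
  shows "binsum m (Mzpow \<gamma>) f = Mzpow \<gamma> (degree_mult (binsum_weight m) f)"
proof
  fix \<alpha>
  have "binsum m (Mzpow \<gamma>) f \<alpha>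
      = (\<Sum>j<m. (-1)^j * of_nat (m choose (j + 1)) * Mzpow \<gamma> (degree_mult (sigma_weight m j) f) \<alpha>)"
    unfolding binsum_def using sigma_iterate_Mzpow[OF m f] by simp
  also have "\<dots> = Mzpow \<gamma> (degree_mult (binsum_weight m) f) \<alpha>"
    unfolding Mzpow_def degree_mult_def binsum_weight_def
    by (simp add: sum_distrib_right mult.assoc del: not_all)
  finally show "binsum m (Mzpow \<gamma>) f \<alpha> = Mzpow \<gamma> (degree_mult (binsum_weight m) f) \<alpha>" .
qed

lemma Mrow_Mzpow_binsum_backshift:
  assumes m: "m \<ge> 1" and u0: "\<And>\<beta>. mabs \<beta> = 0 \<Longrightarrow> u \<beta> = 0"
  shows "Mrow (\<lambda>l. Mzpow \<gamma> (degree_mult (binsum_weight m) (backshift m l u))) = Mzpow \<gamma> u"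
proof -
  have "degree_mult (sigma_mult m (binsum_weight m)) u = u"
  proof
    fix \<beta>
    show "degree_mult (sigma_mult m (binsum_weight m)) u \<beta> = u \<beta>"
      by (cases "mabs \<beta> = 0") (simp_all add: degree_mult_def u0 sigma_mult_binsum_weight[OF m])
  qed
  then show ?thesis unfolding Mrow_Mzpow_degree_mult_backshift by simp
qed

theorem lemma1:
  fixes m :: nat and \<gamma> :: "'n::finite \<Rightarrow> nat"
  assumes "m \<ge> 1"
  shows "\<forall>F\<in>Hmn m. Mrow'_adj m (Mzpow \<gamma> (Mrow' m F))
           = P_ImMzstar m (oplus_n (binsum m (Mzpow \<gamma>)) (P_ImMzstar m F))"
proof
  fix F :: "'n \<Rightarrow> 'n coeffs"
  assume F: "F \<in> Hmn m"
  note m = assms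
  define u where "u = delta m (Mrow F)"
  have u: "u \<in> Hm m" unfolding u_def by (rule Hm_delta[OF m Hm_Mrow[OF m F]])
  have u0: "u \<beta> = 0" if "mabs \<beta> = 0" for \<beta>
    using that unfolding u_def delta_def by (simp add: Mrow_eq_0_at_0)
  define G where "G l = Mzpow \<gamma> (degree_mult (binsum_weight m) (backshift m l u))" for l
  have binsum_P: "oplus_n (binsum m (Mzpow \<gamma>)) (P_ImMzstar m F) = G"
    unfolding P_ImMzstar_eq[OF m F] oplus_n_def G_def u_def[symmetric]
    using binsum_Mzpow[OF m Hm_backshift[OF m u]] by simp
  have G: "G \<in> Hmn m"
    unfolding G_def Hmn_def
    using Hm_Mzpow[OF m Hm_degree_mult[OF m Hm_backshift[OF m u] norm_binsum_weight_le[OF m]]] by simp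
  have "Mrow G = Mzpow \<gamma> u"
    unfolding G_def by (rule Mrow_Mzpow_binsum_backshift[OF m u0])
  then show "Mrow'_adj m (Mzpow \<gamma> (Mrow' m F)) = P_ImMzstar m (oplus_n (binsum m (Mzpow \<gamma>)) (P_ImMzstar m F))"
    unfolding binsum_P P_ImMzstar_eq[OF m G] Mrow'_def u_def[symmetric] Mrow'_adj_eq[OF m Hm_Mzpow[OF m u]]
    by simp
qed

end
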